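(* Let $\rho = (\mathcal{V}, V, \mathbf{1}, \mathrm{var}, \mathrm{low}, \mathrm{high}, \mathrm{flip})$ be a COBDD with $\mathcal{V} = \mathcal{X} \,\dot\cup\, \mathcal{U}$, where $\mathcal X=\{x_1,\dots,x_n\}$ and $\mathcal U=\{u_1,\dots,u_r\}$, let $v \in V$ be a node, $b \in \mathbb{B}$ a boolean, and let $[\![ v, b]\!] = K(\mathbf{x}, \mathbf{u})$. Then the C function K output by Synthesize$(\rho, v, b)$ has worst case execution time $O(rn)$.
   Context: $\mathbb{B}=\{0,1\}$; $\exists y\, f := f|_{y=0}+f|_{y=1}$. A COBDD is a tuple $\rho = (\mathcal{V}, V, \mathbf{1}, \mathrm{var}, \mathrm{low}, \mathrm{high}, \mathrm{flip})$ with $\mathcal V$ a finite totally ordered set of boolean variables, $V$ a finite set of nodes, $\mathbf 1\in V$ the terminal node, $\mathrm{var}: V\setminus\{\mathbf 1\}\to\mathcal V$, $\mathrm{high},\mathrm{low}: V\setminus\{\mathbf 1\}\to V$, $\mathrm{flip}: V\setminus\{\mathbf 1\}\to\mathbb B$, with variables strictly increasing along edges $v\to\mathrm{high}(v)$, $v\to\mathrm{low}(v)$; COBDDs are assumed reduced. $\mathrm{height}(v)$ is the length of the longest path from $v$ to $\mathbf 1$. Semantics: $[\![ \mathbf 1, b]\!] := \bar b$ and, for internal $v$ with $\mathrm{var}(v)=y$, $[\![ v,b]\!] := y [\![ \mathrm{high}(v), b]\!] + \bar y [\![ \mathrm{low}(v), b\oplus \mathrm{flip}(v)]\!]$. Synthesize$(\rho,v,b)$: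 (1) for $i=1,\dots,r$ compute (via correct COBDD substitution/quantification operations) a node $v_i$ and bit $b_i$ with $[\![ v_i,b_i]\!] = \exists u_{i+1},\dots,u_r\, K(\mathbf x, [\![ v_1,b_1]\!],\dots,[\![ v_{i-1},b_{i-1}]\!], 1, u_{i+1},\dots,u_r)$; (2) emit C code "int K_bits(int *x, int action) { int ret_b; switch(action) { case $i-1$: ret_b = $\bar b_i$; goto L_$v_i$; ... }" followed by one labeled block per node $w$ reachable from some $v_i$ (each node translated once): "L_$\mathbf 1$: return ret_b;" for the terminal, and for internal $w$ with $\mathrm{var}(w)=x_j$, "L_$w$: if (x[$j-1$] == 1) goto L_$\mathrm{high}(w)$; else {ret_b = !ret_b; goto L_$\mathrm{low}(w)$;}" if $\mathrm{flip}(w)=1$, or "... else goto L_$\mathrm{low}(w)$;" if $\mathrm{flip}(w)=0$; then "}" and "void K(int *x,int *u){int i; for(i=0;i<$r$;i++) u[i]=K_bits(x,i);}". Execution time is counted in executed C statements. *)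

theory Defs
  imports Main
begin

(* Boolean variables: x_j is  Xv j  (1 \<le> j \<le> n),  u_i is  Uv i  (1 \<le> i \<le> r). *)
datatype cvar = Xv nat | Uv nat

(* A COBDD rho = (V_set, V, 1, var, low, high, flip); the total order on the
   variable set is given by an injective rank function. Nodes are naturals. *)
record cobdd =
  c_vars :: "cvar set"
  c_rank :: "cvar \<Rightarrow> nat"
  c_nodes :: "nat set"
  c_one :: nat
  c_var :: "nat \<Rightarrow> cvar"
  c_low :: "nat \<Rightarrow> nat"
  c_high :: "nat \<Rightarrow> nat"
  c_flip :: "nat \<Rightarrow> bool"

definition is_cobdd :: "cobdd \<Rightarrow> bool" where
  "is_cobdd \<rho> \<longleftrightarrow>
     finite (c_vars \<rho>) \<and> inj_on (c_rank \<rho>) (c_vars \<rho>) \<and>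
     finite (c_nodes \<rho>) \<and> c_one \<rho> \<in> c_nodes \<rho> \<and>
     (\<forall>w \<in> c_nodes \<rho> - {c_one \<rho>}.
        c_var \<rho> w \<in> c_vars \<rho> \<and>
        c_high \<rho> w \<in> c_nodes \<rho> \<and> c_low \<rho> w \<in> c_nodes \<rho> \<and>
        (c_high \<rho> w \<noteq> c_one \<rho> \<longrightarrow>
           c_rank \<rho> (c_var \<rho> w) < c_rank \<rho> (c_var \<rho> (c_high \<rho> w))) \<and>
        (c_low \<rho> w \<noteq> c_one \<rho> \<longrightarrow>
           c_rank \<rho> (c_var \<rho> w) < c_rank \<rho> (c_var \<rho> (c_low \<rho> w))))"

definition reduced :: "cobdd \<Rightarrow> bool" where
  "reduced \<rho> \<longleftrightarrow>
     (\<forall>w \<in> c_nodes \<rho> - {c_one \<rho>}.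
        \<not> (c_high \<rho> w = c_low \<rho> w \<and> \<not> c_flip \<rho> w)) \<and>
     (\<forall>w \<in> c_nodes \<rho> - {c_one \<rho>}. \<forall>w' \<in> c_nodes \<rho> - {c_one \<rho>}.
        c_var \<rho> w = c_var \<rho> w' \<and> c_high \<rho> w = c_high \<rho> w' \<and>
        c_low \<rho> w = c_low \<rho> w' \<and> c_flip \<rho> w = c_flip \<rho> w' \<longrightarrow> w = w')"

definition reduced_cobdd :: "cobdd \<Rightarrow> bool" where
  "reduced_cobdd \<rho> \<longleftrightarrow> is_cobdd \<rho> \<and> reduced \<rho>"

definition extends :: "cobdd \<Rightarrow> cobdd \<Rightarrow> bool" where
  "extends \<rho>' \<rho> \<longleftrightarrow>
     c_vars \<rho>' = c_vars \<rho> \<and> c_rank \<rho>' = c_rank \<rho> \<and> c_one \<rho>' = c_one \<rho> \<and>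
     c_nodes \<rho> \<subseteq> c_nodes \<rho>' \<and>
     (\<forall>w \<in> c_nodes \<rho> - {c_one \<rho>}.
        c_var \<rho>' w = c_var \<rho> w \<and> c_high \<rho>' w = c_high \<rho> w \<and>
        c_low \<rho>' w = c_low \<rho> w \<and> c_flip \<rho>' w = c_flip \<rho> w)"

(* The recursion follows a path of a well-formed COBDD, whose length is
   below the number of nodes, so the fuel  card (c_nodes rho)  suffices. *)
fun semf :: "cobdd \<Rightarrow> nat \<Rightarrow> nat \<Rightarrow> bool \<Rightarrow> (cvar \<Rightarrow> bool) \<Rightarrow> bool" where
  "semf \<rho> 0 w b \<sigma> = (\<not> b)"
| "semf \<rho> (Suc k) w b \<sigma> =
     (if w = c_one \<rho> then \<not> b
      else if \<sigma> (c_var \<rho> w) then semf \<rho> k (c_high \<rho> w) b \<sigma>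
      else semf \<rho> k (c_low \<rho> w) (b \<noteq> c_flip \<rho> w) \<sigma>)"

definition sem :: "cobdd \<Rightarrow> nat \<Rightarrow> bool \<Rightarrow> (cvar \<Rightarrow> bool) \<Rightarrow> bool" where
  "sem \<rho> w b \<sigma> = semf \<rho> (card (c_nodes \<rho>)) w b \<sigma>"

(* Step (1) of Synthesize: v_i, b_i (i = 1..r) satisfy
   [[v_i,b_i]] = EX u_{i+1}..u_r. K(x, [[v_1,b_1]],..,[[v_{i-1},b_{i-1}]], 1, u_{i+1},..,u_r)
   where K = [[v,b]] (a node of rho). *)
definition synth_spec ::
  "cobdd \<Rightarrow> nat \<Rightarrow> bool \<Rightarrow> cobdd \<Rightarrow> nat \<Rightarrow> (nat \<Rightarrow> nat) \<Rightarrow> (nat \<Rightarrow> bool) \<Rightarrow> bool" where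
  "synth_spec \<rho> v b \<rho>' r vs bs \<longleftrightarrow>
     (\<forall>i \<in> {1..r}. vs i \<in> c_nodes \<rho>' \<and>
        (\<forall>\<sigma>. sem \<rho>' (vs i) (bs i) \<sigma> =
           (\<exists>\<tau>. sem \<rho> v b
              (\<lambda>y. case y of
                  Xv j \<Rightarrow> \<sigma> (Xv j)
                | Uv j \<Rightarrow> (if j < i then sem \<rho>' (vs j) (bs j) \<sigma>
                            else if j = i then True else \<tau> j)))))"

(* A tiny model of the emitted C code (labels are nodes). *)
datatype cstmt =
    CSetRet bool                 (* ret_b = c;  *)
  | CNeg                         (* ret_b = !ret_b; *)
  | CGoto nat
  | CReturn
  | CIf nat "cstmt list" "cstmt list"   (* if (x[k] == 1) S1 else S2 *)

(* Block of label L_w, as emitted by step (2) of Synthesize. *)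
definition block :: "cobdd \<Rightarrow> nat \<Rightarrow> cstmt list" where
  "block \<rho> w =
     (if w = c_one \<rho> then [CReturn]
      else (case c_var \<rho> w of
              Xv j \<Rightarrow> [CIf (j - 1) [CGoto (c_high \<rho> w)]
                           ((if c_flip \<rho> w then [CNeg] else []) @ [CGoto (c_low \<rho> w)])]
            | Uv j \<Rightarrow> []))"

(* Execution with fuel; returns the returned value and the number of
   executed statements (an 'if' counts 1 plus its executed branch). *)
fun run :: "nat \<Rightarrow> (nat \<Rightarrow> bool) \<Rightarrow> (nat \<Rightarrow> cstmt list) \<Rightarrow> cstmt list \<Rightarrow> bool
            \<Rightarrow> (bool \<times> nat) option" where
  "run 0 x B ss r = None"
| "run (Suc f) x B [] r = None"
| "run (Suc f) x B (CSetRet c # ss) r = map_option (\<lambda>(v,t). (v, Suc t)) (run f x B ss c)"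
| "run (Suc f) x B (CNeg # ss) r = map_option (\<lambda>(v,t). (v, Suc t)) (run f x B ss (\<not> r))"
| "run (Suc f) x B (CGoto l # ss) r = map_option (\<lambda>(v,t). (v, Suc t)) (run f x B (B l) r)"
| "run (Suc f) x B (CReturn # ss) r = Some (r, 1)"
| "run (Suc f) x B (CIf k s1 s2 # ss) r =
     map_option (\<lambda>(v,t). (v, Suc t)) (run f x B ((if x k then s1 else s2) @ ss) r)"

(* K_bits(x, action) terminates after executing t statements:
   the switch (1 statement), then  ret_b = !b_{i+1}; goto L_{v_{i+1}};  ... *)
definition kbits_exec ::
  "cobdd \<Rightarrow> (nat \<Rightarrow> nat) \<Rightarrow> (nat \<Rightarrow> bool) \<Rightarrow> (nat \<Rightarrow> bool) \<Rightarrow> nat \<Rightarrow> nat \<Rightarrow> bool" where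
  "kbits_exec \<rho> vs bs x a t \<longleftrightarrow>
     (\<exists>f ret t'. run f x (block \<rho>)
                    [CSetRet (\<not> bs (a + 1)), CGoto (vs (a + 1))] False = Some (ret, t')
               \<and> t = Suc t')"

(* K(x,u) terminates after executing t statements: the loop
   for(i=0;i<r;i++) u[i]=K_bits(x,i);  costs 1 init + (r+1) tests + r increments
   + r assignments, plus the statements executed inside the calls. *)
definition K_exec ::
  "cobdd \<Rightarrow> nat \<Rightarrow> (nat \<Rightarrow> nat) \<Rightarrow> (nat \<Rightarrow> bool) \<Rightarrow> (nat \<Rightarrow> bool) \<Rightarrow> nat \<Rightarrow> bool" where
  "K_exec \<rho> r vs bs x t \<longleftrightarrow>
     (\<exists>ts. (\<forall>a < r. kbits_exec \<rho> vs bs x a (ts a)) \<and>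
           t = 3 * r + 2 + (\<Sum>a<r. ts a))"

end

(* In a reduced COBDD distinct pairs (node, bit) denote distinct functions, so every internal
   node depends essentially on its variable. By the specification of step (1) the function
   of each v_i depends on x alone (induction on i), hence no node reachable from v_i tests a
   u-variable. A call K_bits(x, i) therefore follows a path of x-nodes of strictly increasing
   rank, executing at most three statements per node, i.e. O(n) statements, and the r calls
   made by K cost O(rn). *)

theory Submission
  imports Defs
begin

locale wf_cobdd =
  fixes R :: cobdd
  assumes wf: "is_cobdd R"
begin

abbreviation "V \<equiv> c_nodes R"
abbreviation "one \<equiv> c_one R"
abbreviation "var \<equiv> c_var R"
abbreviation "hi \<equiv> c_high R"
abbreviation "lo \<equiv> c_low R"
abbreviation "fl \<equiv> c_flip R"
abbreviation "rk \<equiv> c_rank R"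

lemma finite_nodes: "finite V"
  and terminal_in_nodes: "one \<in> V"
  and inj_on_rank: "inj_on rk (c_vars R)"
  using wf unfolding is_cobdd_def by auto

lemma
  assumes "w \<in> V" "w \<noteq> one"
  shows var_in_vars: "var w \<in> c_vars R"
    and high_in_nodes: "hi w \<in> V"
    and low_in_nodes: "lo w \<in> V"
    and rank_high: "hi w \<noteq> one \<Longrightarrow> rk (var w) < rk (var (hi w))"
    and rank_low: "lo w \<noteq> one \<Longrightarrow> rk (var w) < rk (var (lo w))"
  using wf assms unfolding is_cobdd_def by auto

text \<open>Ranks increase along edges, so this count decreases along edges and bounds the height of
  \<open>w\<close>; it stays below \<open>card V\<close>, the fuel of \<open>sem\<close>.\<close>
definition height_bound :: "nat \<Rightarrow> nat" where
  "height_bound w = (if w = one then 0 else card {u \<in> V - {one}. rk (var w) \<le> rk (var u)})"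

lemma height_bound_less:
  assumes "w \<in> V" "w \<noteq> one" "u \<in> V" "u \<noteq> one \<Longrightarrow> rk (var w) < rk (var u)"
  shows "height_bound u < height_bound w"
proof -
  let ?S = "\<lambda>w. {u \<in> V - {one}. rk (var w) \<le> rk (var u)}"
  have fin: "finite (?S w)" using finite_nodes by auto
  have w: "w \<in> ?S w" using assms by auto
  show ?thesis
  proof (cases "u = one")
    case True
    then show ?thesis using fin w assms(2) by (auto simp: height_bound_def card_gt_0_iff)
  next
    case False
    have "?S u \<subseteq> ?S w - {w}" using assms(4)[OF False] by auto
    then have "card (?S u) \<le> card (?S w - {w})" using fin by (intro card_mono) auto
    also have "\<dots> < card (?S w)" by (rule card_Diff1_less[OF fin w])
    finally show ?thesis using False assms(2) by (simp add: height_bound_def)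
  qed
qed

lemma height_bound_high: "w \<in> V \<Longrightarrow> w \<noteq> one \<Longrightarrow> height_bound (hi w) < height_bound w"
  by (rule height_bound_less[OF _ _ high_in_nodes rank_high])

lemma height_bound_low: "w \<in> V \<Longrightarrow> w \<noteq> one \<Longrightarrow> height_bound (lo w) < height_bound w"
  by (rule height_bound_less[OF _ _ low_in_nodes rank_low])

lemma height_bound_less_card:
  assumes "w \<in> V"
  shows "height_bound w < card V"
proof -
  have "card {u \<in> V - {one}. rk (var w) \<le> rk (var u)} \<le> card (V - {one})"
    using finite_nodes by (intro card_mono) auto
  also have "\<dots> < card V" by (rule card_Diff1_less[OF finite_nodes terminal_in_nodes])
  finally show ?thesis by (simp add: height_bound_def)
qed

lemma cobdd_induct [consumes 1, case_names node]:
  assumes "w \<in> V"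
    and "\<And>w. w \<in> V \<Longrightarrow> (w \<noteq> one \<Longrightarrow> P (hi w)) \<Longrightarrow> (w \<noteq> one \<Longrightarrow> P (lo w)) \<Longrightarrow> P w"
  shows "P w"
  using assms(1)
proof (induction "height_bound w" arbitrary: w rule: less_induct)
  case less
  then show ?case
    using assms(2) high_in_nodes low_in_nodes height_bound_high height_bound_low by metis
qed

lemma semf_fuel:
  "w \<in> V \<Longrightarrow> height_bound w < k \<Longrightarrow> height_bound w < k' \<Longrightarrow> semf R k w b \<sigma> = semf R k' w b \<sigma>"
proof (induction k arbitrary: k' w b)
  case 0
  then show ?case by simp
next
  case (Suc k)
  then obtain k'' where k': "k' = Suc k''" by (cases k') auto
  show ?case
  proof (cases "w = one")
    case True
    then show ?thesis using k' by simp
  next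
    case False
    have "semf R k (hi w) b \<sigma> = semf R k'' (hi w) b \<sigma>"
      using Suc high_in_nodes height_bound_high False k' by (metis less_trans_Suc not_less_eq)
    moreover have "semf R k (lo w) d \<sigma> = semf R k'' (lo w) d \<sigma>" for d
      using Suc low_in_nodes height_bound_low False k' by (metis less_trans_Suc not_less_eq)
    ultimately show ?thesis using False k' by simp
  qed
qed

lemma sem_terminal: "sem R one c \<sigma> = (\<not> c)"
  using height_bound_less_card[OF terminal_in_nodes]
  by (cases "card V") (simp_all add: sem_def)

lemma sem_node:
  assumes "w \<in> V" "w \<noteq> one"
  shows "sem R w c \<sigma> = (if \<sigma> (var w) then sem R (hi w) c \<sigma> else sem R (lo w) (c \<noteq> fl w) \<sigma>)"
proof -
  obtain k where k: "card V = Suc k"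
    using height_bound_less_card[OF assms(1)] by (cases "card V") auto
  have "semf R k (hi w) c \<sigma> = sem R (hi w) c \<sigma>"
    unfolding sem_def k using height_bound_high[OF assms] height_bound_less_card[OF assms(1)] k
    by (intro semf_fuel high_in_nodes[OF assms]) auto
  moreover have "semf R k (lo w) d \<sigma> = sem R (lo w) d \<sigma>" for d
    unfolding sem_def k using height_bound_low[OF assms] height_bound_less_card[OF assms(1)] k
    by (intro semf_fuel low_in_nodes[OF assms]) auto
  ultimately show ?thesis using assms(2) by (simp add: sem_def k)
qed

lemma sem_cong:
  assumes "w \<in> V" "\<forall>y\<in>c_vars R. \<sigma> y = \<sigma>' y"
  shows "sem R w c \<sigma> = sem R w c \<sigma>'"
  using assms(1)
proof (induction w arbitrary: c rule: cobdd_induct)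
  case (node w)
  then show ?case using assms(2) sem_terminal sem_node var_in_vars by (cases "w = one") auto
qed

lemma sem_upd_below:
  assumes "w \<in> V" "w \<noteq> one \<Longrightarrow> rk y < rk (var w)"
  shows "sem R w c (\<sigma>(y := a)) = sem R w c \<sigma>"
  using assms
proof (induction w arbitrary: c rule: cobdd_induct)
  case (node w)
  show ?case
  proof (cases "w = one")
    case True
    then show ?thesis by (simp add: sem_terminal)
  next
    case False
    have "rk y < rk (var (hi w))" if "hi w \<noteq> one"
      using node.prems[OF False] rank_high[OF node.hyps False that] by linarith
    moreover have "rk y < rk (var (lo w))" if "lo w \<noteq> one"
      using node.prems[OF False] rank_low[OF node.hyps False that] by linarith
    moreover have "var w \<noteq> y" using node.prems[OF False] by auto
    ultimately show ?thesis using node.IH False sem_node[OF node.hyps False] by simp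
  qed
qed

lemma sem_high_cofactor:
  assumes "w \<in> V" "w \<noteq> one"
  shows "sem R w c (\<sigma>(var w := True)) = sem R (hi w) c \<sigma>"
  using sem_node[OF assms] sem_upd_below[OF high_in_nodes[OF assms] rank_high[OF assms]] by simp

lemma sem_low_cofactor:
  assumes "w \<in> V" "w \<noteq> one"
  shows "sem R w c (\<sigma>(var w := False)) = sem R (lo w) (c \<noteq> fl w) \<sigma>"
  using sem_node[OF assms] sem_upd_below[OF low_in_nodes[OF assms] rank_low[OF assms]] by simp

lemma sem_depends_on_var_iff:
  assumes "w \<in> V" "w \<noteq> one"
  shows "(\<exists>\<sigma>. sem R w c (\<sigma>(var w := True)) \<noteq> sem R w c (\<sigma>(var w := False))) \<longleftrightarrow>
    sem R (hi w) c \<noteq> sem R (lo w) (c \<noteq> fl w)"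
  using sem_high_cofactor[OF assms] sem_low_cofactor[OF assms] by (auto simp: fun_eq_iff)

lemma sem_neq_if_var_below:
  assumes "w1 \<in> V" "w1 \<noteq> one" "w2 \<in> V" "w2 \<noteq> one \<Longrightarrow> rk (var w1) < rk (var w2)"
    and "sem R (hi w1) c1 \<noteq> sem R (lo w1) (c1 \<noteq> fl w1)"
  shows "sem R w1 c1 \<noteq> sem R w2 c2"
proof -
  obtain \<sigma> where "sem R w1 c1 (\<sigma>(var w1 := True)) \<noteq> sem R w1 c1 (\<sigma>(var w1 := False))"
    using assms(5) sem_depends_on_var_iff[OF assms(1,2)] by blast
  then show ?thesis using sem_upd_below[OF assms(3,4)] by metis
qed

lemma sem_eq_cofactors:
  assumes "w1 \<in> V" "w1 \<noteq> one" "w2 \<in> V" "w2 \<noteq> one" "var w1 = var w2"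
    and "sem R w1 c1 = sem R w2 c2"
  shows "sem R (hi w1) c1 = sem R (hi w2) c2"
    and "sem R (lo w1) (c1 \<noteq> fl w1) = sem R (lo w2) (c2 \<noteq> fl w2)"
proof -
  show "sem R (hi w1) c1 = sem R (hi w2) c2"
  proof
    fix \<sigma>
    show "sem R (hi w1) c1 \<sigma> = sem R (hi w2) c2 \<sigma>"
      using sem_high_cofactor[OF assms(1,2), of c1 \<sigma>] sem_high_cofactor[OF assms(3,4), of c2 \<sigma>]
        assms(5,6) by simp
  qed
  show "sem R (lo w1) (c1 \<noteq> fl w1) = sem R (lo w2) (c2 \<noteq> fl w2)"
  proof
    fix \<sigma>
    show "sem R (lo w1) (c1 \<noteq> fl w1) \<sigma> = sem R (lo w2) (c2 \<noteq> fl w2) \<sigma>"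
      using sem_low_cofactor[OF assms(1,2), of c1 \<sigma>] sem_low_cofactor[OF assms(3,4), of c2 \<sigma>]
        assms(5,6) by simp
  qed
qed

end

locale wf_reduced_cobdd = wf_cobdd +
  assumes reduced: "reduced R"
begin

lemma flip_if_high_eq_low: "w \<in> V \<Longrightarrow> w \<noteq> one \<Longrightarrow> hi w = lo w \<Longrightarrow> fl w"
  using reduced unfolding reduced_def by blast

lemma node_eqI:
  "w \<in> V \<Longrightarrow> w \<noteq> one \<Longrightarrow> w' \<in> V \<Longrightarrow> w' \<noteq> one \<Longrightarrow> var w = var w' \<Longrightarrow>
   hi w = hi w' \<Longrightarrow> lo w = lo w' \<Longrightarrow> fl w = fl w' \<Longrightarrow> w = w'"
  using reduced unfolding reduced_def by blast

text \<open>Canonicity, by induction on the larger height bound: an internal node depends on its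
  variable because its two cofactors are distinct by induction and reducedness; hence two
  nodes denoting the same function test the same variable, and their children coincide by
  induction.\<close>
lemma sem_injective:
  assumes "w1 \<in> V" "w2 \<in> V" "sem R w1 c1 = sem R w2 c2"
  shows "w1 = w2 \<and> c1 = c2"
  using assms
proof (induction "max (height_bound w1) (height_bound w2)" arbitrary: w1 w2 c1 c2
    rule: less_induct)
  case less
  have cofactors_differ: "sem R (hi w) c \<noteq> sem R (lo w) (c \<noteq> fl w)"
    if w: "w \<in> V" "w \<noteq> one" "height_bound w \<le> max (height_bound w1) (height_bound w2)" for w c
  proof
    assume "sem R (hi w) c = sem R (lo w) (c \<noteq> fl w)"
    moreover have "max (height_bound (hi w)) (height_bound (lo w)) < max (height_bound w1) (height_bound w2)"
      using height_bound_high[OF w(1,2)] height_bound_low[OF w(1,2)] w(3) by simp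
    ultimately have "hi w = lo w \<and> c = (c \<noteq> fl w)"
      using less.hyps high_in_nodes[OF w(1,2)] low_in_nodes[OF w(1,2)] by blast
    then show False using flip_if_high_eq_low[OF w(1,2)] by auto
  qed
  consider "w1 = one" "w2 = one" | "w1 \<noteq> one" "w2 = one \<or> rk (var w1) < rk (var w2)"
    | "w2 \<noteq> one" "w1 = one \<or> rk (var w2) < rk (var w1)"
    | "w1 \<noteq> one" "w2 \<noteq> one" "rk (var w1) = rk (var w2)"
    by linarith
  then show ?case
  proof cases
    case 1
    then show ?thesis using less.prems(3) sem_terminal by metis
  next
    case 2
    have "sem R w1 c1 \<noteq> sem R w2 c2"
      using 2(2) by (intro sem_neq_if_var_below[OF less.prems(1) 2(1) less.prems(2)]
          cofactors_differ[OF less.prems(1) 2(1) max.cobounded1]) auto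
    then show ?thesis using less.prems(3) by blast
  next
    case 3
    have "sem R w2 c2 \<noteq> sem R w1 c1"
      using 3(2) by (intro sem_neq_if_var_below[OF less.prems(2) 3(1) less.prems(1)]
          cofactors_differ[OF less.prems(2) 3(1) max.cobounded2]) auto
    then show ?thesis using less.prems(3) by simp
  next
    case 4
    then have var_eq: "var w1 = var w2"
      using inj_onD[OF inj_on_rank] var_in_vars less.prems(1,2) by metis
    note cofactors = sem_eq_cofactors[OF less.prems(1) 4(1) less.prems(2) 4(2) var_eq less.prems(3)]
    have high: "hi w1 = hi w2 \<and> c1 = c2"
      using less.hyps[OF _ high_in_nodes[OF less.prems(1) 4(1)] high_in_nodes[OF less.prems(2) 4(2)]
          cofactors(1)]
        height_bound_high[OF less.prems(1) 4(1)] height_bound_high[OF less.prems(2) 4(2)]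
      by fastforce
    have low: "lo w1 = lo w2 \<and> (c1 \<noteq> fl w1) = (c2 \<noteq> fl w2)"
      using less.hyps[OF _ low_in_nodes[OF less.prems(1) 4(1)] low_in_nodes[OF less.prems(2) 4(2)]
          cofactors(2)]
        height_bound_low[OF less.prems(1) 4(1)] height_bound_low[OF less.prems(2) 4(2)]
      by fastforce
    show ?thesis
      using node_eqI[OF less.prems(1) 4(1) less.prems(2) 4(2) var_eq] high low by auto
  qed
qed

lemma sem_depends_on_var:
  assumes "w \<in> V" "w \<noteq> one"
  shows "\<exists>\<sigma>. sem R w c (\<sigma>(var w := True)) \<noteq> sem R w c (\<sigma>(var w := False))"
  unfolding sem_depends_on_var_iff[OF assms]
proof
  assume "sem R (hi w) c = sem R (lo w) (c \<noteq> fl w)"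
  then have "hi w = lo w \<and> c = (c \<noteq> fl w)"
    using sem_injective high_in_nodes[OF assms] low_in_nodes[OF assms] by blast
  then show False using flip_if_high_eq_low[OF assms] by auto
qed

end

definition x_determined :: "((cvar \<Rightarrow> bool) \<Rightarrow> bool) \<Rightarrow> bool" where
  "x_determined f \<longleftrightarrow> (\<forall>\<sigma> \<sigma>'. (\<forall>j. \<sigma> (Xv j) = \<sigma>' (Xv j)) \<longrightarrow> f \<sigma> = f \<sigma>')"

lemma x_determined_upd: "x_determined f \<Longrightarrow> x_determined (\<lambda>\<sigma>. f (\<sigma>(y := a)))"
proof (unfold x_determined_def, intro allI impI)
  fix \<sigma> \<sigma>' :: "cvar \<Rightarrow> bool"
  assume "\<forall>\<sigma> \<sigma>'. (\<forall>j. \<sigma> (Xv j) = \<sigma>' (Xv j)) \<longrightarrow> f \<sigma> = f \<sigma>'" "\<forall>j. \<sigma> (Xv j) = \<sigma>' (Xv j)"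
  then show "f (\<sigma>(y := a)) = f (\<sigma>'(y := a))" by simp
qed

definition runs_within ::
  "(nat \<Rightarrow> bool) \<Rightarrow> (nat \<Rightarrow> cstmt list) \<Rightarrow> cstmt list \<Rightarrow> bool \<Rightarrow> nat \<Rightarrow> bool" where
  "runs_within x B ss r T \<longleftrightarrow>
     (\<exists>f res t. run f x B ss r = Some (res, t)) \<and>
     (\<forall>f res t. run f x B ss r = Some (res, t) \<longrightarrow> t \<le> T)"

lemma runs_within_mono: "runs_within x B ss r T \<Longrightarrow> T \<le> T' \<Longrightarrow> runs_within x B ss r T'"
  unfolding runs_within_def by fastforce

lemma runs_within_return: "runs_within x B (CReturn # ss) r 1"
proof -
  have "run (Suc 0) x B (CReturn # ss) r = Some (r, 1)" by simp
  moreover have "t \<le> 1" if "run f x B (CReturn # ss) r = Some (res, t)" for f res t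
    using that by (cases f) auto
  ultimately show ?thesis unfolding runs_within_def by blast
qed

lemma runs_within_Suc:
  assumes step: "\<And>f. run (Suc f) x B ss r = map_option (\<lambda>(v, t). (v, Suc t)) (run f x B ss' r')"
    and "runs_within x B ss' r' T"
  shows "runs_within x B ss r (Suc T)"
proof -
  obtain f res t where "run f x B ss' r' = Some (res, t)"
    using assms(2) unfolding runs_within_def by blast
  then have "run (Suc f) x B ss r = Some (res, Suc t)" by (simp add: step)
  moreover have "t \<le> Suc T" if run: "run f x B ss r = Some (res, t)" for f res t
  proof (cases f)
    case 0
    then show ?thesis using that by (cases ss) auto
  next
    case (Suc f')
    then obtain t' where "run f' x B ss' r' = Some (res, t')" "t = Suc t'"
      using run Suc step[of f'] by (cases "run f' x B ss' r'") auto
    then show ?thesis using assms(2) unfolding runs_within_def by auto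
  qed
  ultimately show ?thesis unfolding runs_within_def by blast
qed

lemma runs_within_set_ret: "runs_within x B ss c T \<Longrightarrow> runs_within x B (CSetRet c # ss) r (Suc T)"
  by (rule runs_within_Suc) simp_all

lemma runs_within_neg: "runs_within x B ss (\<not> r) T \<Longrightarrow> runs_within x B (CNeg # ss) r (Suc T)"
  by (rule runs_within_Suc) simp_all

lemma runs_within_goto: "runs_within x B (B l) r T \<Longrightarrow> runs_within x B (CGoto l # ss) r (Suc T)"
  by (rule runs_within_Suc) simp_all

lemma runs_within_if:
  "runs_within x B ((if x k then s1 else s2) @ ss) r T \<Longrightarrow> runs_within x B (CIf k s1 s2 # ss) r (Suc T)"
  by (rule runs_within_Suc) simp_all

context wf_cobdd
begin

lemma x_determined_high:
  assumes "w \<in> V" "w \<noteq> one" "x_determined (sem R w c)"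
  shows "x_determined (sem R (hi w) c)"
proof -
  have "sem R (hi w) c = (\<lambda>\<sigma>. sem R w c (\<sigma>(var w := True)))"
    using sem_high_cofactor[OF assms(1,2)] by simp
  then show ?thesis using x_determined_upd[OF assms(3)] by simp
qed

lemma x_determined_low:
  assumes "w \<in> V" "w \<noteq> one" "x_determined (sem R w c)"
  shows "x_determined (sem R (lo w) (c \<noteq> fl w))"
proof -
  have "sem R (lo w) (c \<noteq> fl w) = (\<lambda>\<sigma>. sem R w c (\<sigma>(var w := False)))"
    using sem_low_cofactor[OF assms(1,2)] by simp
  then show ?thesis using x_determined_upd[OF assms(3)] by simp
qed

text \<open>Drops along every edge leaving an \<open>x\<close>-node, so it bounds the number of blocks
  executed from \<open>w\<close>.\<close>
definition x_height :: "nat \<Rightarrow> nat \<Rightarrow> nat" where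
  "x_height n w = (if w = one then 0 else card {j \<in> {1..n}. rk (var w) \<le> rk (Xv j)})"

lemma x_height_le: "x_height n w \<le> n"
proof -
  have "card {j \<in> {1..n}. rk (var w) \<le> rk (Xv j)} \<le> card {1..n}"
    by (rule card_mono) auto
  then show ?thesis by (simp add: x_height_def)
qed

lemma x_height_less:
  assumes "w \<noteq> one" "var w = Xv j" "j \<in> {1..n}" "u \<noteq> one \<Longrightarrow> rk (var w) < rk (var u)"
  shows "x_height n u < x_height n w"
proof -
  let ?A = "\<lambda>w. {j \<in> {1..n}. rk (var w) \<le> rk (Xv j)}"
  have fin: "finite (?A w)" by auto
  have j: "j \<in> ?A w" using assms by auto
  show ?thesis
  proof (cases "u = one")
    case True
    then show ?thesis using fin j assms(1) by (auto simp: x_height_def card_gt_0_iff)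
  next
    case False
    have "?A u \<subseteq> ?A w - {j}" using assms(2) assms(4)[OF False] by auto
    then have "card (?A u) \<le> card (?A w - {j})" using fin by (intro card_mono) auto
    also have "\<dots> < card (?A w)" by (rule card_Diff1_less[OF fin j])
    finally show ?thesis using False assms(1) by (simp add: x_height_def)
  qed
qed

end

context wf_reduced_cobdd
begin

lemma x_determined_var_Xv:
  assumes "w \<in> V" "w \<noteq> one" "x_determined (sem R w c)"
  obtains j where "var w = Xv j"
proof (cases "var w")
  case (Uv j)
  obtain \<sigma> where "sem R w c (\<sigma>(var w := True)) \<noteq> sem R w c (\<sigma>(var w := False))"
    using sem_depends_on_var[OF assms(1,2)] by blast
  moreover have "sem R w c (\<sigma>(var w := True)) = sem R w c (\<sigma>(var w := False))"
    using assms(3) Uv unfolding x_determined_def by simp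
  ultimately show ?thesis by contradiction
qed

lemma block_runs_within:
  assumes vars: "c_vars R \<subseteq> Xv ` {1..n} \<union> range Uv"
    and "w \<in> V" "x_determined (sem R w c)"
  shows "runs_within x (block R) (block R w) rr (3 * x_height n w + 1)"
  using assms(2,3)
proof (induction "x_height n w" arbitrary: w c rr rule: less_induct)
  case less
  show ?case
  proof (cases "w = one")
    case True
    then show ?thesis
      using runs_within_return[of x "block R" "[]" rr] by (simp add: block_def x_height_def)
  next
    case False
    obtain j where j: "var w = Xv j"
      using x_determined_var_Xv[OF less.prems(1) False less.prems(2)] by blast
    then have j_range: "j \<in> {1..n}" using var_in_vars[OF less.prems(1) False] vars by auto
    have high_less: "x_height n (hi w) < x_height n w"
      using rank_high[OF less.prems(1) False] by (rule x_height_less[OF False j j_range])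
    have low_less: "x_height n (lo w) < x_height n w"
      using rank_low[OF less.prems(1) False] by (rule x_height_less[OF False j j_range])
    have high: "runs_within x (block R) (block R (hi w)) rr' (3 * x_height n (hi w) + 1)" for rr'
      using less.hyps[OF high_less high_in_nodes[OF less.prems(1) False]
          x_determined_high[OF less.prems(1) False less.prems(2)]] .
    have low: "runs_within x (block R) (block R (lo w)) rr' (3 * x_height n (lo w) + 1)" for rr'
      using less.hyps[OF low_less low_in_nodes[OF less.prems(1) False]
          x_determined_low[OF less.prems(1) False less.prems(2)]] .
    have "runs_within x (block R) [CGoto (hi w)] rr (3 * x_height n w)"
      by (rule runs_within_mono[OF runs_within_goto[OF high]]) (use high_less in linarith)
    moreover have "runs_within x (block R) ((if fl w then [CNeg] else []) @ [CGoto (lo w)]) rr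
        (3 * x_height n w)"
    proof (cases "fl w")
      case True
      have "runs_within x (block R) [CNeg, CGoto (lo w)] rr (3 * x_height n w)"
        by (rule runs_within_mono[OF runs_within_neg[OF runs_within_goto[OF low]]])
          (use low_less in linarith)
      then show ?thesis using True by simp
    next
      case False
      have "runs_within x (block R) [CGoto (lo w)] rr (3 * x_height n w)"
        by (rule runs_within_mono[OF runs_within_goto[OF low]]) (use low_less in linarith)
      then show ?thesis using False by simp
    qed
    ultimately have "runs_within x (block R)
        (if x (j - 1) then [CGoto (hi w)] else (if fl w then [CNeg] else []) @ [CGoto (lo w)])
        rr (3 * x_height n w)"
      by simp
    then show ?thesis
      using False j runs_within_if[where ss = "[]"] by (simp add: block_def)
  qed
qed

end

lemma synth_nodes_x_determined:
  assumes wf: "is_cobdd \<rho>" and vars: "c_vars \<rho> \<subseteq> range Xv \<union> Uv ` {1..r}"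
    and "v \<in> c_nodes \<rho>" and spec: "synth_spec \<rho> v b \<rho>' r vs bs" and "i \<in> {1..r}"
  shows "x_determined (sem \<rho>' (vs i) (bs i))"
  using assms(5)
proof (induction i rule: less_induct)
  case (less i)
  let ?subst = "\<lambda>\<sigma> \<tau> y. case y of
      Xv j \<Rightarrow> \<sigma> (Xv j)
    | Uv j \<Rightarrow> (if j < i then sem \<rho>' (vs j) (bs j) \<sigma> else if j = i then True else \<tau> j)"
  have subst_agree: "sem \<rho> v b (?subst \<sigma> \<tau>) = sem \<rho> v b (?subst \<sigma>' \<tau>)"
    if agree: "\<forall>j. \<sigma> (Xv j) = \<sigma>' (Xv j)" for \<sigma> \<sigma>' \<tau>
  proof (rule wf_cobdd.sem_cong[OF wf_cobdd.intro[OF wf] assms(3)], intro ballI)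
    fix y assume y: "y \<in> c_vars \<rho>"
    show "?subst \<sigma> \<tau> y = ?subst \<sigma>' \<tau> y"
    proof (cases y)
      case (Xv j)
      then show ?thesis using agree by simp
    next
      case (Uv j)
      then have "j \<in> {1..r}" using y vars by auto
      then show ?thesis
        using Uv agree less.IH[of j] less.prems unfolding x_determined_def by auto
    qed
  qed
  have sem_eq: "sem \<rho>' (vs i) (bs i) \<sigma> = (\<exists>\<tau>. sem \<rho> v b (?subst \<sigma> \<tau>))" for \<sigma>
    using spec less.prems unfolding synth_spec_def by blast
  show ?case
    unfolding x_determined_def
  proof (intro allI impI)
    fix \<sigma> \<sigma>' :: "cvar \<Rightarrow> bool"
    assume agree: "\<forall>j. \<sigma> (Xv j) = \<sigma>' (Xv j)"
    show "sem \<rho>' (vs i) (bs i) \<sigma> = sem \<rho>' (vs i) (bs i) \<sigma>'"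
      by (simp only: sem_eq subst_agree[OF agree])
  qed
qed

lemma synthesized_block_runs_within:
  assumes \<rho>: "is_cobdd \<rho>" and vars: "c_vars \<rho> = Xv ` {1..n} \<union> Uv ` {1..r}"
    and "v \<in> c_nodes \<rho>" and \<rho>': "reduced_cobdd \<rho>'" and "extends \<rho>' \<rho>"
    and spec: "synth_spec \<rho> v b \<rho>' r vs bs" and i: "i \<in> {1..r}"
  shows "runs_within x (block \<rho>') (block \<rho>' (vs i)) rr (3 * n + 1)"
proof -
  interpret \<rho>': wf_reduced_cobdd \<rho>'
    using \<rho>' by unfold_locales (simp_all add: reduced_cobdd_def)
  have vars': "c_vars \<rho>' \<subseteq> Xv ` {1..n} \<union> range Uv"
    using \<open>extends \<rho>' \<rho>\<close> vars unfolding extends_def by auto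
  have "vs i \<in> c_nodes \<rho>'" using spec i unfolding synth_spec_def by blast
  moreover have "x_determined (sem \<rho>' (vs i) (bs i))"
    using vars by (intro synth_nodes_x_determined[OF \<rho> _ \<open>v \<in> c_nodes \<rho>\<close> spec i]) auto
  ultimately show ?thesis
    by (rule runs_within_mono[OF \<rho>'.block_runs_within[OF vars']]) (simp add: \<rho>'.x_height_le)
qed

lemma K_exec_bounds:
  assumes "\<And>a. a < r \<Longrightarrow> runs_within x (block R) (block R (vs (Suc a))) (\<not> bs (Suc a)) T"
  shows "\<exists>t. K_exec R r vs bs x t"
    and "K_exec R r vs bs x t \<Longrightarrow> t \<le> 3 * r + 2 + r * (T + 3)"
proof -
  have code: "runs_within x (block R) [CSetRet (\<not> bs (a + 1)), CGoto (vs (a + 1))] False (T + 2)"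
    if "a < r" for a
    using runs_within_set_ret[OF runs_within_goto[OF assms[OF that]]] by simp
  have kbits: "\<exists>t. kbits_exec R vs bs x a t" "kbits_exec R vs bs x a t \<Longrightarrow> t \<le> T + 3"
    if "a < r" for a t
    using code[OF that] unfolding runs_within_def kbits_exec_def by fastforce+
  then obtain ts where "\<forall>a<r. kbits_exec R vs bs x a (ts a)" by metis
  then show "\<exists>t. K_exec R r vs bs x t" unfolding K_exec_def by blast
  assume "K_exec R r vs bs x t"
  then obtain ts where ts: "\<forall>a<r. kbits_exec R vs bs x a (ts a)"
    and t: "t = 3 * r + 2 + (\<Sum>a<r. ts a)"
    unfolding K_exec_def by blast
  have "(\<Sum>a<r. ts a) \<le> (\<Sum>a<r. T + 3)" by (rule sum_mono) (use ts kbits in auto)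
  then show "t \<le> 3 * r + 2 + r * (T + 3)" using t by simp
qed

theorem corollary1:
  shows "\<exists>C::nat. \<forall>(n::nat) (r::nat) \<rho> \<rho>' (v::nat) (b::bool) vs bs.
     reduced_cobdd \<rho> \<and> c_vars \<rho> = Xv ` {1..n} \<union> Uv ` {1..r} \<and> v \<in> c_nodes \<rho> \<and>
     1 \<le> n \<and> 1 \<le> r \<and>
     reduced_cobdd \<rho>' \<and> extends \<rho>' \<rho> \<and> synth_spec \<rho> v b \<rho>' r vs bs
     \<longrightarrow> (\<forall>x. (\<exists>t. K_exec \<rho>' r vs bs x t) \<and>
               (\<forall>t. K_exec \<rho>' r vs bs x t \<longrightarrow> t \<le> C * (r * n)))"
proof (intro exI[of _ 12] allI impI)
  fix n r \<rho> \<rho>' v b vs bs x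
  assume hyps: "reduced_cobdd \<rho> \<and> c_vars \<rho> = Xv ` {1..n} \<union> Uv ` {1..r} \<and> v \<in> c_nodes \<rho> \<and>
     1 \<le> n \<and> 1 \<le> r \<and> reduced_cobdd \<rho>' \<and> extends \<rho>' \<rho> \<and> synth_spec \<rho> v b \<rho>' r vs bs"
  then have "runs_within x (block \<rho>') (block \<rho>' (vs (Suc a))) (\<not> bs (Suc a)) (3 * n + 1)"
    if "a < r" for a
    using that by (intro synthesized_block_runs_within) (auto simp: reduced_cobdd_def)
  note bounds = K_exec_bounds[of r x \<rho>' vs bs, OF this]
  have "r \<le> r * n" "1 \<le> r * n" "r * (3 * n + 1 + 3) = 3 * (r * n) + 4 * r"
    using hyps by (simp_all add: algebra_simps)
  then have "3 * r + 2 + r * (3 * n + 1 + 3) \<le> 12 * (r * n)" by linarith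
  then show "(\<exists>t. K_exec \<rho>' r vs bs x t) \<and> (\<forall>t. K_exec \<rho>' r vs bs x t \<longrightarrow> t \<le> 12 * (r * n))"
    using bounds by (auto intro: order_trans)
qed

end
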